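(* Let $(\rho_0,p_0)$ solve the TOV system on $[0,R)$ with regular centre and mass function $m_0$, let $g_0(r)=\frac{m_0+4\pi p_0r^3}{r^2[1-2m_0/r]}$, and assume $1+r g_0(r)>0$ on $[0,R)$. For a real parameter $\delta\rho_c$ define $$\delta m(r)=\frac{4\pi r^3\,\delta\rho_c}{3\,[1+r g_0(r)]^2}\exp\Bigl\{2\int_0^r g_0(s)\,\frac{1-s g_0(s)}{1+s g_0(s)}\,ds\Bigr\},\qquad \delta p(r)=-\frac{\delta m(r)}{4\pi r^3}\,\frac{1+8\pi p_0(r)r^2}{1-2m_0(r)/r}.$$ Set $m=m_0+\delta m$, $\rho=m'/(4\pi r^2)$, $p=p_0+\delta p$. Then on every interval $[0,R')\subseteq[0,R)$ on which $1-2m(r)/r>0$, the pair $(\rho,p)$ solves the TOV system with regular centre, has mass function $m$, satisfies $$\frac{m+4\pi p r^3}{r^2[1-2m/r]}=g_0(r),$$ and has central density $\rho_0(0)+\delta\rho_c$ and central pressure $p_0(0)+\delta p_c$ with $\delta p_c=-\delta\rho_c/3$. Explicitly $$\delta p(r)=\frac{\delta p_c}{[1+rg_0]^2}\,\frac{1+8\pi p_0r^2}{1-2m_0/r}\exp\Bigl\{2\int_0^r g_0\frac{1-sg_0}{1+sg_0}ds\Bigr\}.$$ Conversely, every solution of the TOV system with regular centre whose function $\frac{m+4\pi pr^3}{r^2[1-2m/r]}$ equals $g_0$ is of this form. *)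

theory Defs
  imports "HOL-Analysis.Analysis" "HOL-Library.Extended_Real"
begin

definition Icr :: "ereal \<Rightarrow> real set" where
  "Icr R = {r::real. 0 \<le> r \<and> ereal r < R}"

definition mass :: "(real \<Rightarrow> real) \<Rightarrow> real \<Rightarrow> real" where
  "mass \<rho> r = 4 * pi * integral {0..r} (\<lambda>s. s^2 * \<rho> s)"

text \<open>The function (m + 4 pi p r^3) / (r^2 (1 - 2m/r)); at r = 0 Isabelle's
  division convention gives 0, which is its limiting value for a regular centre.\<close>
definition gfun :: "(real \<Rightarrow> real) \<Rightarrow> (real \<Rightarrow> real) \<Rightarrow> real \<Rightarrow> real" where
  "gfun m p r = (m r + 4 * pi * p r * r^3) / (r^2 * (1 - 2 * m r / r))"

text \<open>(rho,p) solves the TOV system on [0,R) with regular centre: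
  rho and p are continuous on [0,R) (finite central values), the mass is
  m(r) = 4 pi int_0^r s^2 rho, 1 - 2m/r > 0 for 0 < r < R and
  p' = -(rho + p)(m + 4 pi p r^3)/(r^2(1-2m/r)) for 0 < r < R.\<close>
definition TOV_regular :: "ereal \<Rightarrow> (real \<Rightarrow> real) \<Rightarrow> (real \<Rightarrow> real) \<Rightarrow> bool" where
  "TOV_regular R \<rho> p \<longleftrightarrow>
     continuous_on (Icr R) \<rho> \<and> continuous_on (Icr R) p \<and>
     (\<forall>r\<in>Icr R. r > 0 \<longrightarrow>
        1 - 2 * mass \<rho> r / r > 0 \<and>
        (p has_real_derivative (- (\<rho> r + p r) * gfun (mass \<rho>) p r)) (at r))"

definition Phi :: "(real \<Rightarrow> real) \<Rightarrow> (real \<Rightarrow> real) \<Rightarrow> real \<Rightarrow> real" where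
  "Phi \<rho>0 p0 r = exp (2 * integral {0..r}
      (\<lambda>s. gfun (mass \<rho>0) p0 s * (1 - s * gfun (mass \<rho>0) p0 s) / (1 + s * gfun (mass \<rho>0) p0 s)))"

definition dm :: "(real \<Rightarrow> real) \<Rightarrow> (real \<Rightarrow> real) \<Rightarrow> real \<Rightarrow> real \<Rightarrow> real" where
  "dm \<rho>0 p0 d\<rho>c r =
     4 * pi * r^3 * d\<rho>c / (3 * (1 + r * gfun (mass \<rho>0) p0 r)^2) * Phi \<rho>0 p0 r"

definition dp :: "(real \<Rightarrow> real) \<Rightarrow> (real \<Rightarrow> real) \<Rightarrow> real \<Rightarrow> real \<Rightarrow> real" where
  "dp \<rho>0 p0 d\<rho>c r =
     (if r = 0 then - d\<rho>c / 3
      else - (dm \<rho>0 p0 d\<rho>c r / (4 * pi * r^3)) * (1 + 8 * pi * p0 r * r^2)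
             / (1 - 2 * mass \<rho>0 r / r))"

definition pert_m :: "(real \<Rightarrow> real) \<Rightarrow> (real \<Rightarrow> real) \<Rightarrow> real \<Rightarrow> real \<Rightarrow> real" where
  "pert_m \<rho>0 p0 d\<rho>c r = mass \<rho>0 r + dm \<rho>0 p0 d\<rho>c r"

definition pert_rho :: "(real \<Rightarrow> real) \<Rightarrow> (real \<Rightarrow> real) \<Rightarrow> real \<Rightarrow> real \<Rightarrow> real" where
  "pert_rho \<rho>0 p0 d\<rho>c r =
     (if r = 0 then \<rho>0 0 + d\<rho>c else deriv (pert_m \<rho>0 p0 d\<rho>c) r / (4 * pi * r^2))"

definition pert_p :: "(real \<Rightarrow> real) \<Rightarrow> (real \<Rightarrow> real) \<Rightarrow> real \<Rightarrow> real \<Rightarrow> real" where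
  "pert_p \<rho>0 p0 d\<rho>c r = p0 r + dp \<rho>0 p0 d\<rho>c r"

end

theory Submission
  imports Defs
begin

text \<open>Write m = m0 + 4 pi r^3 u. Since (m + 4 pi p r^3) / (r^2 (1 - 2m/r)) is a ratio of
  expressions affine in (m, p), keeping it equal to g0 is an affine condition, namely
  p = p0 - u (1 + 2 w) with w = r g0, while rho = m' / (4 pi r^2) = rho0 + 3 u + r u'.
  Substituting both into the TOV equation for p, the background equation cancels and what
  remains is the linear equation r u' = kappa u with kappa = 2 (w (1 - w) - r w') / (1 + w).
  Since 2 g0 (1 - w) / (1 + w) - 2 w' / (1 + w) = kappa / r, its solutions are the multiples
  of Phi / (1 + w)^2, and the multiple is fixed by the central value u(0) = delta rho_c / 3.\<close>

definition Icr_pos :: "ereal \<Rightarrow> real set" where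
  "Icr_pos R = {r. 0 < r \<and> ereal r < R}"

lemma mem_Icr_pos: "r \<in> Icr_pos R \<longleftrightarrow> r \<in> Icr R \<and> 0 < r"
  by (auto simp: Icr_pos_def Icr_def)

lemma Icr_pos_subset_Icr: "Icr_pos R \<subseteq> Icr R"
  by (auto simp: mem_Icr_pos)

lemma Icr_mono: "R' \<le> R \<Longrightarrow> Icr R' \<subseteq> Icr R"
  by (auto simp: Icr_def)

lemma open_Icr_pos: "open (Icr_pos R)"
proof (cases R)
  case (real x)
  then have "Icr_pos R = {0<..<x}" by (auto simp: Icr_pos_def)
  then show ?thesis by simp
next
  case PInf
  then have "Icr_pos R = {0<..}" by (auto simp: Icr_pos_def)
  then show ?thesis by simp
next
  case MInf
  then have "Icr_pos R = {}" by (auto simp: Icr_pos_def)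
  then show ?thesis by simp
qed

lemma atLeastAtMost_subset_Icr: "b \<in> Icr R \<Longrightarrow> {0..b} \<subseteq> Icr R"
  by (auto simp: Icr_def) (meson ereal_less_eq(3) order_le_less_trans)

lemma Icr_pos_above:
  assumes "x \<in> Icr R"
  obtains b where "b \<in> Icr_pos R" "x < b"
proof (cases R)
  case (real y)
  with assms have "(x + y) / 2 \<in> Icr_pos R" "x < (x + y) / 2"
    by (auto simp: Icr_pos_def Icr_def)
  then show ?thesis by (rule that)
next
  case PInf
  with assms have "x + 1 \<in> Icr_pos R" "x < x + 1"
    by (auto simp: Icr_pos_def Icr_def)
  then show ?thesis by (rule that)
qed (use assms in \<open>auto simp: Icr_def\<close>)

lemma at_within_Icr:
  assumes "b \<in> Icr R" "x < b"
  shows "at x within Icr R = at x within {0..b}"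
proof (rule at_within_nhd[of x "{..<b}"])
  show "Icr R \<inter> {..<b} - {x} = {0..b} \<inter> {..<b} - {x}"
    using atLeastAtMost_subset_Icr[OF assms(1)] by (auto simp: Icr_def)
qed (use assms in auto)

lemma at_0_within_Icr:
  assumes "0 \<in> Icr R"
  shows "at 0 within Icr R = at_right 0"
proof -
  obtain b where "b \<in> Icr_pos R" "0 < b"
    using Icr_pos_above[OF assms] .
  moreover from this have "b \<in> Icr R" using Icr_pos_subset_Icr by blast
  ultimately show ?thesis
    using at_within_Icr[of b R 0] at_within_Icc_at_right[of 0 b] by simp
qed

lemma continuous_on_IcrI:
  assumes "\<And>b. b \<in> Icr R \<Longrightarrow> continuous_on {0..b} f"
  shows "continuous_on (Icr R) f"
  unfolding continuous_on_eq_continuous_within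
proof
  fix x assume x: "x \<in> Icr R"
  obtain b where b: "b \<in> Icr_pos R" "x < b"
    using Icr_pos_above[OF x] .
  then have "b \<in> Icr R" "x \<in> {0..b}"
    using x Icr_pos_subset_Icr by (auto simp: Icr_def)
  then show "continuous (at x within Icr R) f"
    using assms at_within_Icr[of b R x] b(2) continuous_on_eq_continuous_within by metis
qed

lemma has_real_derivative_integral_Icr:
  assumes f: "continuous_on (Icr R) f" and r: "r \<in> Icr_pos R"
  shows "((\<lambda>x. integral {0..x} f) has_real_derivative f r) (at r)"
proof -
  obtain b where b: "b \<in> Icr_pos R" "r < b"
    using Icr_pos_above r Icr_pos_subset_Icr by blast
  then have "b \<in> Icr R" using Icr_pos_subset_Icr by blast
  then have c: "continuous_on {0..b} f"
    using continuous_on_subset[OF f atLeastAtMost_subset_Icr] by blast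
  have r0: "0 < r" using r by (simp add: mem_Icr_pos)
  then have "r \<in> {0..b}" using b by simp
  from integral_has_real_derivative[OF c this] show ?thesis
    using at_within_Icc_at[OF r0 b(2)] by simp
qed

lemma continuous_on_integral_Icr:
  fixes f :: "real \<Rightarrow> real"
  assumes "continuous_on (Icr R) f"
  shows "continuous_on (Icr R) (\<lambda>x. integral {0..x} f)"
proof (rule continuous_on_IcrI)
  fix b assume "b \<in> Icr R"
  then have "continuous_on {0..b} f"
    using continuous_on_subset[OF assms atLeastAtMost_subset_Icr] by blast
  then show "continuous_on {0..b} (\<lambda>x. integral {0..x} f)"
    by (intro indefinite_integral_continuous_1 integrable_continuous_real)
qed

lemma Icr_eq_if_eq_on_Icr_pos:
  fixes f g :: "real \<Rightarrow> real"
  assumes f: "continuous_on (Icr R) f" and g: "continuous_on (Icr R) g"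
    and eq: "\<And>x. x \<in> Icr_pos R \<Longrightarrow> f x = g x" and r: "r \<in> Icr R"
  shows "f r = g r"
proof (cases "r = 0")
  case True
  obtain b where b: "b \<in> Icr_pos R" "0 < b"
    using Icr_pos_above[OF r] True by blast
  have bI: "b \<in> Icr R" using b(1) Icr_pos_subset_Icr by blast
  have cl: "closure {0<..b} = {0..b}" using b(2) by simp
  have "continuous_on (closure {0<..b}) (\<lambda>x. f x - g x)"
    unfolding cl using atLeastAtMost_subset_Icr[OF bI]
    by (intro continuous_on_diff continuous_on_subset[OF f] continuous_on_subset[OF g])
  moreover have "f x - g x = 0" if "x \<in> {0<..b}" for x
    using atLeastAtMost_subset_Icr[OF bI] that eq by (auto simp: mem_Icr_pos subset_iff)
  moreover have "0 \<in> closure {0<..b}" unfolding cl using b(2) by simp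
  ultimately have "f 0 - g 0 = 0" by (rule continuous_constant_on_closure)
  then show ?thesis using True by simp
next
  case False
  with r have "r \<in> Icr_pos R" by (auto simp: Icr_pos_def Icr_def)
  then show ?thesis by (rule eq)
qed

lemma linear_ode_unique_Icr:
  fixes f y a :: "real \<Rightarrow> real"
  assumes f: "continuous_on (Icr R) f" and y: "continuous_on (Icr R) y"
    and y_nz: "\<And>x. x \<in> Icr R \<Longrightarrow> y x \<noteq> 0"
    and f': "\<And>x. x \<in> Icr_pos R \<Longrightarrow> (f has_real_derivative a x * f x) (at x)"
    and y': "\<And>x. x \<in> Icr_pos R \<Longrightarrow> (y has_real_derivative a x * y x) (at x)"
    and r: "r \<in> Icr R"
  shows "f r = f 0 / y 0 * y r"
proof (cases "r = 0")
  case True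
  then show ?thesis using y_nz[OF r] by simp
next
  case False
  then have r0: "0 < r" using r by (simp add: Icr_def)
  have sub: "{0..r} \<subseteq> Icr R" by (rule atLeastAtMost_subset_Icr[OF r])
  have "\<forall>x\<in>{0..r}. y x \<noteq> 0" using sub y_nz by blast
  then have "continuous_on {0..r} (\<lambda>x. f x / y x)"
    using sub by (intro continuous_on_divide continuous_on_subset[OF f] continuous_on_subset[OF y])
  moreover have "((\<lambda>x. f x / y x) has_real_derivative 0) (at x)" if "0 < x" "x < r" for x
  proof -
    have x: "x \<in> Icr_pos R" using that sub by (auto simp: mem_Icr_pos subset_iff)
    have "y x \<noteq> 0" using x y_nz Icr_pos_subset_Icr by blast
    with DERIV_divide[OF f'[OF x] y'[OF x]] show ?thesis
      by (simp add: power2_eq_square)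
  qed
  ultimately have "f r / y r = f 0 / y 0"
    using DERIV_isconst_end[OF r0] by blast
  then show ?thesis using y_nz[OF r] by (simp add: field_simps)
qed

lemma mass_0 [simp]: "mass \<rho> 0 = 0"
  by (simp add: mass_def)

lemma continuous_on_mass:
  "continuous_on (Icr R) \<rho> \<Longrightarrow> continuous_on (Icr R) (mass \<rho>)"
  unfolding mass_def[abs_def] by (intro continuous_intros continuous_on_integral_Icr)

lemma has_real_derivative_mass:
  assumes "continuous_on (Icr R) \<rho>" "r \<in> Icr_pos R"
  shows "(mass \<rho> has_real_derivative 4 * pi * r^2 * \<rho> r) (at r)"
proof -
  have "continuous_on (Icr R) (\<lambda>s. s^2 * \<rho> s)"
    by (intro continuous_intros assms(1))
  from DERIV_cmult[OF has_real_derivative_integral_Icr[OF this assms(2)], of "4 * pi"]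
  show ?thesis unfolding mass_def[abs_def] by (simp add: mult.assoc)
qed

lemma mass_eq_if_has_real_derivative:
  assumes M: "continuous_on (Icr R) M" "M 0 = 0"
    and M': "\<And>x. x \<in> Icr_pos R \<Longrightarrow> (M has_real_derivative 4 * pi * x^2 * \<rho> x) (at x)"
    and r: "r \<in> Icr R"
  shows "mass \<rho> r = M r"
proof -
  have "0 \<le> r" using r by (simp add: Icr_def)
  then have "((\<lambda>s. 4 * pi * (s^2 * \<rho> s)) has_integral M r - M 0) {0..r}"
  proof (rule fundamental_theorem_of_calculus_interior)
    show "continuous_on {0..r} M"
      by (rule continuous_on_subset[OF M(1) atLeastAtMost_subset_Icr[OF r]])
  next
    fix x assume "x \<in> {0<..<r}"
    then have "x \<in> Icr_pos R"
      using atLeastAtMost_subset_Icr[OF r] by (auto simp: mem_Icr_pos subset_iff)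
    then show "(M has_vector_derivative 4 * pi * (x^2 * \<rho> x)) (at x)"
      using M' by (simp add: has_real_derivative_iff_has_vector_derivative[symmetric] mult.assoc)
  qed
  from integral_unique[OF this] M(2) show ?thesis
    by (simp add: mass_def)
qed

definition mass_over_cube :: "(real \<Rightarrow> real) \<Rightarrow> real \<Rightarrow> real" where
  "mass_over_cube \<rho> r = (if r = 0 then 4 * pi * \<rho> 0 / 3 else mass \<rho> r / r^3)"

lemma mass_eq_cube_mult: "mass \<rho> r = r^3 * mass_over_cube \<rho> r"
  by (simp add: mass_over_cube_def)

lemma has_real_derivative_mass_over_cube:
  assumes \<rho>: "continuous_on (Icr R) \<rho>" and r: "r \<in> Icr_pos R"
  shows "(mass_over_cube \<rho> has_real_derivative
            (4 * pi * \<rho> r - 3 * mass_over_cube \<rho> r) / r) (at r)"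
proof -
  have r0: "0 < r" using r by (simp add: mem_Icr_pos)
  have "((\<lambda>x. mass \<rho> x / x^3) has_real_derivative
      (4 * pi * r^2 * \<rho> r * r^3 - mass \<rho> r * (3 * r^2)) / (r^3 * r^3)) (at r)"
    using r0 by (intro DERIV_divide has_real_derivative_mass[OF \<rho> r])
      (auto intro!: derivative_eq_intros)
  moreover have "(4 * pi * r^2 * \<rho> r * r^3 - mass \<rho> r * (3 * r^2)) / (r^3 * r^3)
      = (4 * pi * \<rho> r - 3 * mass_over_cube \<rho> r) / r"
    using r0 by (simp add: mass_over_cube_def field_simps power2_eq_square power3_eq_cube)
  ultimately have "((\<lambda>x. mass \<rho> x / x^3) has_real_derivative
      (4 * pi * \<rho> r - 3 * mass_over_cube \<rho> r) / r) (at r)"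
    by simp
  then show ?thesis
    by (rule has_field_derivative_transform_within_open[OF _ open_Icr_pos r])
      (auto simp: mass_over_cube_def mem_Icr_pos)
qed

lemma tendsto_at_right_0_Icr:
  assumes "continuous_on (Icr R) f" "0 \<in> Icr R"
  shows "(f \<longlongrightarrow> f 0) (at_right 0)"
  using assms unfolding continuous_on_def at_0_within_Icr[OF assms(2), symmetric] by blast

lemma eventually_at_right_0_Icr_pos:
  assumes "0 \<in> Icr R"
  shows "\<forall>\<^sub>F x in at_right 0. x \<in> Icr_pos R"
proof -
  obtain b where "b \<in> Icr_pos R" "0 < b"
    using Icr_pos_above[OF assms] .
  then show ?thesis
    unfolding eventually_at_right_field
    using atLeastAtMost_subset_Icr Icr_pos_subset_Icr
    by (intro exI[of _ b]) (auto simp: mem_Icr_pos subset_iff)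
qed

lemma tendsto_mass_over_cube:
  assumes \<rho>: "continuous_on (Icr R) \<rho>" and R: "0 \<in> Icr R"
  shows "(mass_over_cube \<rho> \<longlongrightarrow> 4 * pi * \<rho> 0 / 3) (at_right 0)"
proof -
  have "((\<lambda>x. mass \<rho> x / x^3) \<longlongrightarrow> 4 * pi * \<rho> 0 / 3) (at_right 0)"
  proof (rule lhopital_right_0[where f' = "\<lambda>x. 4 * pi * x^2 * \<rho> x" and g' = "\<lambda>x. 3 * x^2"])
    show "(mass \<rho> \<longlongrightarrow> 0) (at_right 0)"
      using tendsto_at_right_0_Icr[OF continuous_on_mass[OF \<rho>] R] by simp
    show "((\<lambda>x::real. x^3) \<longlongrightarrow> 0) (at_right 0)"
      by (intro tendsto_eq_intros) auto
    show "\<forall>\<^sub>F x in at_right 0. x^3 \<noteq> (0::real)" "\<forall>\<^sub>F x in at_right 0. 3 * x^2 \<noteq> (0::real)"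
      by (auto simp: eventually_at_right_field intro: exI[of _ 1])
    show "\<forall>\<^sub>F x in at_right 0. (mass \<rho> has_real_derivative 4 * pi * x^2 * \<rho> x) (at x)"
      using eventually_at_right_0_Icr_pos[OF R]
      by eventually_elim (rule has_real_derivative_mass[OF \<rho>])
    show "\<forall>\<^sub>F x in at_right 0. ((\<lambda>x. x^3) has_real_derivative 3 * x^2) (at x)"
      by (auto intro!: always_eventually derivative_eq_intros)
    have "((\<lambda>x. 4 * pi * \<rho> x / 3) \<longlongrightarrow> 4 * pi * \<rho> 0 / 3) (at_right 0)"
      by (intro tendsto_intros tendsto_at_right_0_Icr[OF \<rho> R]) simp
    moreover have "\<forall>\<^sub>F x in at_right 0. 4 * pi * \<rho> x / 3 = 4 * pi * x^2 * \<rho> x / (3 * x^2)"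
      by (auto simp: eventually_at_right_field intro: exI[of _ 1])
    ultimately show "((\<lambda>x. 4 * pi * x^2 * \<rho> x / (3 * x^2)) \<longlongrightarrow> 4 * pi * \<rho> 0 / 3) (at_right 0)"
      by (rule Lim_transform_eventually)
  qed
  moreover have "\<forall>\<^sub>F x in at_right 0. mass \<rho> x / x^3 = mass_over_cube \<rho> x"
    by (auto simp: eventually_at_right_field mass_over_cube_def intro: exI[of _ 1])
  ultimately show ?thesis
    by (rule Lim_transform_eventually)
qed

lemma continuous_on_mass_over_cube:
  assumes \<rho>: "continuous_on (Icr R) \<rho>"
  shows "continuous_on (Icr R) (mass_over_cube \<rho>)"
  unfolding continuous_on_eq_continuous_within
proof
  fix x assume x: "x \<in> Icr R"
  show "continuous (at x within Icr R) (mass_over_cube \<rho>)"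
  proof (cases "x = 0")
    case True
    with x have "0 \<in> Icr R" by simp
    from tendsto_mass_over_cube[OF \<rho> this] at_0_within_Icr[OF this]
    show ?thesis
      using True by (simp add: continuous_within mass_over_cube_def)
  next
    case False
    with x have "x \<in> Icr_pos R" by (auto simp: Icr_pos_def Icr_def)
    from has_real_derivative_mass_over_cube[OF \<rho> this] have "isCont (mass_over_cube \<rho>) x"
      by (rule DERIV_isCont)
    then show ?thesis by (rule continuous_at_imp_continuous_at_within)
  qed
qed

lemma TOV_regular_mono: "R' \<le> R \<Longrightarrow> TOV_regular R \<rho> p \<Longrightarrow> TOV_regular R' \<rho> p"
  using Icr_mono[of R' R] unfolding TOV_regular_def by (meson continuous_on_subset subsetD)

lemma gfun_eq_if_mass_cube:
  assumes "m r = r^3 * a"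
  shows "gfun m p r = r * (a + 4 * pi * p r) / (1 - 2 * r^2 * a)"
proof (cases "r = 0")
  case False
  have "m r + 4 * pi * p r * r^3 = r^2 * (r * (a + 4 * pi * p r))"
    "r^2 * (1 - 2 * m r / r) = r^2 * (1 - 2 * r^2 * a)"
    using assms False by (simp_all add: algebra_simps power2_eq_square power3_eq_cube)
  then show ?thesis
    using False by (simp add: gfun_def)
qed (simp add: gfun_def)

lemma gfun_shift_algebra:
  fixes r a v p q d :: real
  defines "e \<equiv> 1 - 2 * r^2 * (a + 4 * pi * v)"
  assumes r: "r \<noteq> 0" and d: "d = 1 - 2 * r^2 * a" "d \<noteq> 0" and e: "e \<noteq> 0"
  shows "r * (a + 4 * pi * v + 4 * pi * q) / e = r * (a + 4 * pi * p) / d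
    \<longleftrightarrow> q = p - v * (1 + 2 * (r^2 * (a + 4 * pi * p) / d))"
proof -
  have key: "(a + 4 * pi * v + 4 * pi * q) * d - (a + 4 * pi * p) * e
      = 4 * pi * d * (q - (p - v * (1 + 2 * (r^2 * (a + 4 * pi * p) / d))))"
    using d(2) by (simp add: e_def field_simps) (simp add: d(1) algebra_simps)
  have "r * (a + 4 * pi * v + 4 * pi * q) / e = r * (a + 4 * pi * p) / d
      \<longleftrightarrow> r * ((a + 4 * pi * v + 4 * pi * q) * d - (a + 4 * pi * p) * e) = 0"
    using d(2) e by (simp add: frac_eq_eq algebra_simps)
  also have "\<dots> \<longleftrightarrow> q = p - v * (1 + 2 * (r^2 * (a + 4 * pi * p) / d))"
    unfolding key using r d(2) by simp
  finally show ?thesis .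
qed

locale TOV_background =
  fixes \<rho>0 p0 :: "real \<Rightarrow> real" and R :: ereal
  assumes sol0: "TOV_regular R \<rho>0 p0"
    and pos: "\<forall>r\<in>Icr R. 1 + r * gfun (mass \<rho>0) p0 r > 0"
begin

abbreviation "g0 \<equiv> gfun (mass \<rho>0) p0"

definition "a0 = mass_over_cube \<rho>0"

definition "d0 r = 1 - 2 * r^2 * a0 r"

definition "w r = r * g0 r"

lemma rho0_cont: "continuous_on (Icr R) \<rho>0"
  and p0_cont: "continuous_on (Icr R) p0"
  using sol0 by (auto simp: TOV_regular_def)

lemma p0_deriv: "r \<in> Icr_pos R \<Longrightarrow> (p0 has_real_derivative - (\<rho>0 r + p0 r) * g0 r) (at r)"
  using sol0 by (auto simp: TOV_regular_def mem_Icr_pos)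

lemma a0_cont: "continuous_on (Icr R) a0"
  unfolding a0_def by (rule continuous_on_mass_over_cube[OF rho0_cont])

lemma a0_deriv: "r \<in> Icr_pos R \<Longrightarrow> (a0 has_real_derivative (4 * pi * \<rho>0 r - 3 * a0 r) / r) (at r)"
  unfolding a0_def by (rule has_real_derivative_mass_over_cube[OF rho0_cont])

lemma d0_pos: "r \<in> Icr R \<Longrightarrow> d0 r > 0"
proof (cases "r = 0")
  case False
  moreover assume r: "r \<in> Icr R"
  ultimately have "1 - 2 * mass \<rho>0 r / r > 0"
    using sol0 by (auto simp: TOV_regular_def Icr_def)
  moreover have "mass \<rho>0 r / r = r^2 * a0 r"
    using False by (simp add: mass_eq_cube_mult a0_def power2_eq_square power3_eq_cube)
  ultimately show ?thesis by (simp add: d0_def)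
qed (simp add: d0_def)

lemma d0_cont: "continuous_on (Icr R) d0"
  unfolding d0_def[abs_def] by (intro continuous_intros a0_cont)

lemma g0_eq: "g0 r = r * (a0 r + 4 * pi * p0 r) / d0 r"
  unfolding d0_def a0_def by (rule gfun_eq_if_mass_cube[OF mass_eq_cube_mult])

lemma w_eq: "w r = r^2 * (a0 r + 4 * pi * p0 r) / d0 r"
  by (simp add: w_def g0_eq power2_eq_square)

lemma w_0 [simp]: "w 0 = 0"
  by (simp add: w_def)

lemma w_pos: "r \<in> Icr R \<Longrightarrow> 1 + w r > 0"
  using pos by (simp add: w_def)

lemma g0_cont: "continuous_on (Icr R) g0"
  unfolding g0_eq[abs_def] using d0_pos
  by (intro continuous_intros a0_cont p0_cont d0_cont) force

lemma w_cont: "continuous_on (Icr R) w"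
  unfolding w_def[abs_def] by (intro continuous_intros g0_cont)

text \<open>r w'(r), written so that its continuity at the centre is visible.\<close>
definition "rdw r = r^2 * ((2 * (a0 r + 4 * pi * p0 r) + 4 * pi * \<rho>0 r - 3 * a0 r
      - 4 * pi * (\<rho>0 r + p0 r) * w r) * d0 r
    - (a0 r + 4 * pi * p0 r) * (2 * r^2 * a0 r - 8 * pi * r^2 * \<rho>0 r)) / (d0 r)^2"

lemma rdw_0 [simp]: "rdw 0 = 0"
  by (simp add: rdw_def)

lemma rdw_cont: "continuous_on (Icr R) rdw"
  unfolding rdw_def[abs_def] using d0_pos
  by (intro continuous_intros a0_cont p0_cont rho0_cont w_cont d0_cont) force

lemma w_deriv:
  assumes r: "r \<in> Icr_pos R"
  shows "(w has_real_derivative rdw r / r) (at r)"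
proof -
  have r0: "0 < r" and d: "d0 r > 0"
    using r d0_pos Icr_pos_subset_Icr by (auto simp: mem_Icr_pos)
  have num: "((\<lambda>x. x^2 * (a0 x + 4 * pi * p0 x)) has_real_derivative
      2 * r * (a0 r + 4 * pi * p0 r)
      + r^2 * ((4 * pi * \<rho>0 r - 3 * a0 r) / r - 4 * pi * (\<rho>0 r + p0 r) * g0 r)) (at r)"
    by (rule derivative_eq_intros a0_deriv[OF r] p0_deriv[OF r] refl | simp add: algebra_simps)+
  have den: "(d0 has_real_derivative 2 * r * a0 r - 8 * pi * r * \<rho>0 r) (at r)"
    unfolding d0_def[abs_def]
    by (rule DERIV_cong, (rule derivative_eq_intros a0_deriv[OF r] refl)+)
      (use r0 in \<open>simp add: field_simps power2_eq_square\<close>)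
  have "((\<lambda>x. x^2 * (a0 x + 4 * pi * p0 x) / d0 x) has_real_derivative rdw r / r) (at r)"
    using DERIV_divide[OF num den] d r0
    by (rule_tac DERIV_cong) (auto simp: rdw_def w_def field_simps power2_eq_square)
  then show ?thesis
    by (rule has_field_derivative_transform_within_open[OF _ open_Icr_pos r])
      (simp add: w_eq)
qed

lemma g0_integrand_cont:
  "continuous_on (Icr R) (\<lambda>s. g0 s * (1 - s * g0 s) / (1 + s * g0 s))"
  using pos by (intro continuous_intros g0_cont) force

lemma Phi_cont: "continuous_on (Icr R) (Phi \<rho>0 p0)"
  unfolding Phi_def[abs_def]
  by (intro continuous_intros continuous_on_integral_Icr g0_integrand_cont)

lemma Phi_deriv:
  "r \<in> Icr_pos R \<Longrightarrow>
    (Phi \<rho>0 p0 has_real_derivative Phi \<rho>0 p0 r * (2 * (g0 r * (1 - w r) / (1 + w r)))) (at r)"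
  unfolding Phi_def[abs_def] w_def
  by (rule derivative_eq_intros has_real_derivative_integral_Icr[OF g0_integrand_cont] refl
      | simp)+

definition "kappa r = 2 * (w r * (1 - w r) - rdw r) / (1 + w r)"

definition "growth r = Phi \<rho>0 p0 r / (1 + w r)^2"

lemma kappa_0 [simp]: "kappa 0 = 0"
  by (simp add: kappa_def)

lemma kappa_cont: "continuous_on (Icr R) kappa"
  unfolding kappa_def[abs_def] using w_pos
  by (intro continuous_intros w_cont rdw_cont) force

lemma growth_0 [simp]: "growth 0 = 1"
  by (simp add: growth_def Phi_def)

lemma growth_pos: "r \<in> Icr R \<Longrightarrow> growth r > 0"
  using w_pos[of r] unfolding growth_def Phi_def by (intro divide_pos_pos) auto

lemma growth_cont: "continuous_on (Icr R) growth"
  unfolding growth_def[abs_def] using w_pos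
  by (intro continuous_intros Phi_cont w_cont) force

lemma growth_deriv:
  assumes r: "r \<in> Icr_pos R"
  shows "(growth has_real_derivative kappa r / r * growth r) (at r)"
proof -
  have r0: "r \<noteq> 0" and w: "1 + w r > 0"
    using r w_pos Icr_pos_subset_Icr by (auto simp: mem_Icr_pos)
  have g0: "g0 r = w r / r"
    using r0 by (simp add: w_def)
  have "((\<lambda>x. (1 + w x)^2) has_real_derivative 2 * (1 + w r) * (rdw r / r)) (at r)"
    by (rule derivative_eq_intros w_deriv[OF r] refl | simp)+
  from DERIV_divide[OF Phi_deriv[OF r] this]
  have "(growth has_real_derivative
      (Phi \<rho>0 p0 r * (2 * (g0 r * (1 - w r) / (1 + w r))) * (1 + w r)^2
        - Phi \<rho>0 p0 r * (2 * (1 + w r) * (rdw r / r))) / ((1 + w r)^2 * (1 + w r)^2)) (at r)"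
    using w unfolding growth_def[abs_def] by simp
  moreover have "(Phi \<rho>0 p0 r * (2 * (g0 r * (1 - w r) / (1 + w r))) * (1 + w r)^2
        - Phi \<rho>0 p0 r * (2 * (1 + w r) * (rdw r / r))) / ((1 + w r)^2 * (1 + w r)^2)
      = kappa r / r * growth r"
  proof -
    obtain t where t: "w r = t - 1" "t \<noteq> 0" using w by (intro that[of "1 + w r"]) auto
    then show ?thesis
      using r0 by (simp add: g0 kappa_def growth_def field_simps power2_eq_square)
  qed
  ultimately show ?thesis by simp
qed

lemma pressure_deriv_iff:
  assumes r: "r \<in> Icr_pos R" and u: "(u has_real_derivative u') (at r)"
  shows "((\<lambda>x. p0 x - u x * (1 + 2 * w x)) has_real_derivative
           - ((\<rho>0 r + 3 * u r + r * u') + (p0 r - u r * (1 + 2 * w r))) * g0 r) (at r)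
    \<longleftrightarrow> r * u' = kappa r * u r"
proof -
  have r0: "r \<noteq> 0" and w: "1 + w r \<noteq> 0"
    using r w_pos[of r] Icr_pos_subset_Icr by (auto simp: mem_Icr_pos)
  have g0: "g0 r = w r / r"
    using r0 by (simp add: w_def)
  define E where "E = - (\<rho>0 r + p0 r) * g0 r - (u' * (1 + 2 * w r) + u r * (2 * (rdw r / r)))"
  have "((\<lambda>x. p0 x - u x * (1 + 2 * w x)) has_real_derivative E) (at r)"
    unfolding E_def
    by (rule derivative_eq_intros p0_deriv[OF r] u w_deriv[OF r] refl | simp)+
  then have "((\<lambda>x. p0 x - u x * (1 + 2 * w x)) has_real_derivative
           - ((\<rho>0 r + 3 * u r + r * u') + (p0 r - u r * (1 + 2 * w r))) * g0 r) (at r)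
      \<longleftrightarrow> - ((\<rho>0 r + 3 * u r + r * u') + (p0 r - u r * (1 + 2 * w r))) * g0 r - E = 0"
    using DERIV_unique by auto
  also have "- ((\<rho>0 r + 3 * u r + r * u') + (p0 r - u r * (1 + 2 * w r))) * g0 r - E
      = (r * u' * (1 + w r) - 2 * (w r * (1 - w r) - rdw r) * u r) / r"
    using r0 by (simp add: E_def g0 field_simps)
  also have "\<dots> = 0 \<longleftrightarrow> r * u' = kappa r * u r"
    using r0 w by (auto simp: kappa_def field_simps)
  finally show ?thesis .
qed

lemma gfun_eq_g0_iff:
  assumes r: "r \<in> Icr_pos R" and m: "m r = r^3 * (a0 r + 4 * pi * v)"
    and e: "1 - 2 * m r / r \<noteq> 0"
  shows "gfun m p r = g0 r \<longleftrightarrow> p r = p0 r - v * (1 + 2 * w r)"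
proof -
  have r0: "r \<noteq> 0" and d: "d0 r \<noteq> 0"
    using r d0_pos[of r] Icr_pos_subset_Icr by (auto simp: mem_Icr_pos)
  have "1 - 2 * m r / r = 1 - 2 * r^2 * (a0 r + 4 * pi * v)"
    using r0 by (simp add: m power2_eq_square power3_eq_cube)
  moreover have "gfun m p r = r * (a0 r + 4 * pi * v + 4 * pi * p r) / (1 - 2 * r^2 * (a0 r + 4 * pi * v))"
    by (simp add: gfun_eq_if_mass_cube[of m r, OF m] add.assoc)
  ultimately show ?thesis
    using gfun_shift_algebra[OF r0 d0_def d] e by (simp add: g0_eq w_eq)
qed

definition "pert_u c r = c / 3 * growth r"

lemma dm_eq: "dm \<rho>0 p0 c r = 4 * pi * r^3 * pert_u c r"
  by (simp add: dm_def pert_u_def growth_def w_def)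

lemma pert_m_eq: "pert_m \<rho>0 p0 c r = r^3 * (a0 r + 4 * pi * pert_u c r)"
  by (simp add: pert_m_def dm_eq mass_eq_cube_mult a0_def algebra_simps)

lemma pert_p_eq:
  assumes "r \<in> Icr R"
  shows "pert_p \<rho>0 p0 c r = p0 r - pert_u c r * (1 + 2 * w r)"
proof (cases "r = 0")
  case False
  have d: "1 - 2 * mass \<rho>0 r / r = d0 r" "d0 r \<noteq> 0"
    using False d0_pos[OF assms]
    by (simp_all add: d0_def a0_def mass_eq_cube_mult power2_eq_square power3_eq_cube)
  have "1 + 2 * w r = (1 + 8 * pi * p0 r * r^2) / d0 r"
    using d(2) by (simp add: w_eq field_simps) (simp add: d0_def algebra_simps)
  with False d show ?thesis
    by (simp add: pert_p_def dp_def dm_eq)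
qed (simp add: pert_p_def dp_def pert_u_def)

lemma pert_u_deriv:
  "r \<in> Icr_pos R \<Longrightarrow> (pert_u c has_real_derivative kappa r / r * pert_u c r) (at r)"
  unfolding pert_u_def[abs_def]
  by (rule DERIV_cong[OF DERIV_cmult[OF growth_deriv]]) (simp_all add: mult_ac)

lemma pert_m_deriv:
  assumes r: "r \<in> Icr_pos R"
  shows "(pert_m \<rho>0 p0 c has_real_derivative
           4 * pi * r^2 * (\<rho>0 r + (3 + kappa r) * pert_u c r)) (at r)"
proof -
  have r0: "r \<noteq> 0" using r by (simp add: mem_Icr_pos)
  have "pert_m \<rho>0 p0 c = (\<lambda>x. mass \<rho>0 x + 4 * pi * (x^3 * pert_u c x))"
    by (auto simp: pert_m_eq mass_eq_cube_mult a0_def algebra_simps)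
  moreover have "((\<lambda>x. mass \<rho>0 x + 4 * pi * (x^3 * pert_u c x)) has_real_derivative
      4 * pi * r^2 * \<rho>0 r + 4 * pi * (3 * r^2 * pert_u c r + r^3 * (kappa r / r * pert_u c r))) (at r)"
    by (rule derivative_eq_intros has_real_derivative_mass[OF rho0_cont r] pert_u_deriv[OF r]
        refl | simp)+
  ultimately show ?thesis
    using r0 by (simp add: field_simps power2_eq_square power3_eq_cube)
qed

lemma pert_rho_eq:
  assumes "r \<in> Icr R"
  shows "pert_rho \<rho>0 p0 c r = \<rho>0 r + (3 + kappa r) * pert_u c r"
proof (cases "r = 0")
  case False
  with assms have "r \<in> Icr_pos R" by (auto simp: Icr_pos_def Icr_def)
  with False show ?thesis
    by (simp add: pert_rho_def DERIV_imp_deriv[OF pert_m_deriv])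
qed (simp add: pert_rho_def pert_u_def)

lemma pert_u_cont: "continuous_on (Icr R) (pert_u c)"
  unfolding pert_u_def[abs_def] by (intro continuous_intros growth_cont)

lemma pert_m_cont: "continuous_on (Icr R) (pert_m \<rho>0 p0 c)"
  unfolding pert_m_eq[abs_def] by (intro continuous_intros a0_cont pert_u_cont)

lemma pert_rho_cont: "continuous_on (Icr R) (pert_rho \<rho>0 p0 c)"
  by (rule continuous_on_eq[where f = "\<lambda>r. \<rho>0 r + (3 + kappa r) * pert_u c r"])
    (auto intro!: continuous_intros rho0_cont kappa_cont pert_u_cont simp: pert_rho_eq)

lemma pert_p_cont: "continuous_on (Icr R) (pert_p \<rho>0 p0 c)"
  by (rule continuous_on_eq[where f = "\<lambda>r. p0 r - pert_u c r * (1 + 2 * w r)"])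
    (auto intro!: continuous_intros p0_cont pert_u_cont w_cont simp: pert_p_eq)

lemma mass_pert_rho: "r \<in> Icr R \<Longrightarrow> mass (pert_rho \<rho>0 p0 c) r = pert_m \<rho>0 p0 c r"
  by (rule mass_eq_if_has_real_derivative[OF pert_m_cont])
    (auto simp: pert_m_eq pert_rho_eq Icr_pos_subset_Icr[THEN subsetD] intro: pert_m_deriv)

lemma gfun_pert:
  assumes r: "r \<in> Icr R" and m: "r > 0 \<longrightarrow> 1 - 2 * pert_m \<rho>0 p0 c r / r > 0"
  shows "gfun (pert_m \<rho>0 p0 c) (pert_p \<rho>0 p0 c) r = g0 r"
proof (cases "r = 0")
  case False
  with r have "r \<in> Icr_pos R" by (auto simp: Icr_pos_def Icr_def)
  with m show ?thesis
    using pert_p_eq[OF r] by (subst gfun_eq_g0_iff[OF _ pert_m_eq]) (auto simp: mem_Icr_pos)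
qed (simp add: gfun_def)

lemma pert_p_deriv:
  assumes r: "r \<in> Icr_pos R"
  shows "(pert_p \<rho>0 p0 c has_real_derivative
           - (pert_rho \<rho>0 p0 c r + pert_p \<rho>0 p0 c r) * g0 r) (at r)"
proof -
  have rI: "r \<in> Icr R" and r0: "r \<noteq> 0"
    using r Icr_pos_subset_Icr by (auto simp: mem_Icr_pos)
  have "((\<lambda>x. p0 x - pert_u c x * (1 + 2 * w x)) has_real_derivative
      - ((\<rho>0 r + 3 * pert_u c r + r * (kappa r / r * pert_u c r))
         + (p0 r - pert_u c r * (1 + 2 * w r))) * g0 r) (at r)"
    using r0 by (subst pressure_deriv_iff[OF r pert_u_deriv[OF r]]) simp
  then have "((\<lambda>x. p0 x - pert_u c x * (1 + 2 * w x)) has_real_derivative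
      - (pert_rho \<rho>0 p0 c r + pert_p \<rho>0 p0 c r) * g0 r) (at r)"
    using r0 by (simp add: pert_rho_eq[OF rI] pert_p_eq[OF rI] algebra_simps)
  then show ?thesis
    by (rule has_field_derivative_transform_within_open[OF _ open_Icr_pos r])
      (simp add: pert_p_eq Icr_pos_subset_Icr[THEN subsetD])
qed

lemma dp_explicit:
  assumes "r \<in> Icr R"
  shows "dp \<rho>0 p0 c r = (- c / 3) / (1 + r * g0 r)^2
            * (1 + 8 * pi * p0 r * r^2) / (1 - 2 * mass \<rho>0 r / r) * Phi \<rho>0 p0 r"
proof (cases "r = 0")
  case False
  have "1 + r * g0 r \<noteq> 0" using pos assms by force
  with False show ?thesis by (simp add: dp_def dm_def field_simps)
qed (simp add: dp_def Phi_def)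

lemma TOV_regular_pert:
  assumes "\<forall>r\<in>Icr R. r > 0 \<longrightarrow> 1 - 2 * pert_m \<rho>0 p0 c r / r > 0"
  shows "TOV_regular R (pert_rho \<rho>0 p0 c) (pert_p \<rho>0 p0 c)"
  unfolding TOV_regular_def
proof (intro conjI ballI impI pert_rho_cont pert_p_cont)
  fix r assume r: "r \<in> Icr R" "r > 0"
  then have m: "mass (pert_rho \<rho>0 p0 c) r = pert_m \<rho>0 p0 c r"
    by (simp add: mass_pert_rho)
  with r assms show "1 - 2 * mass (pert_rho \<rho>0 p0 c) r / r > 0"
    by simp
  have "gfun (mass (pert_rho \<rho>0 p0 c)) (pert_p \<rho>0 p0 c) r = g0 r"
    using gfun_pert[OF r(1)] assms r by (simp add: gfun_def m)
  with r show "(pert_p \<rho>0 p0 c has_real_derivative - (pert_rho \<rho>0 p0 c r + pert_p \<rho>0 p0 c r)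
      * gfun (mass (pert_rho \<rho>0 p0 c)) (pert_p \<rho>0 p0 c) r) (at r)"
    using pert_p_deriv[of r c] by (simp add: mem_Icr_pos)
qed

definition "mass_excess \<rho> r = (mass_over_cube \<rho> r - a0 r) / (4 * pi)"

lemma mass_eq_mass_excess: "mass \<rho> r = r^3 * (a0 r + 4 * pi * mass_excess \<rho> r)"
  by (simp add: mass_excess_def mass_eq_cube_mult)

lemma mass_excess_0: "mass_excess \<rho> 0 = (\<rho> 0 - \<rho>0 0) / 3"
  by (simp add: mass_excess_def a0_def mass_over_cube_def field_simps)

lemma mass_excess_cont:
  "continuous_on (Icr R) \<rho> \<Longrightarrow> continuous_on (Icr R) (mass_excess \<rho>)"
  unfolding mass_excess_def[abs_def]
  by (intro continuous_intros continuous_on_mass_over_cube a0_cont) auto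

lemma mass_excess_deriv:
  assumes \<rho>: "continuous_on (Icr R) \<rho>" and r: "r \<in> Icr_pos R"
  shows "(mass_excess \<rho> has_real_derivative (\<rho> r - \<rho>0 r - 3 * mass_excess \<rho> r) / r) (at r)"
  unfolding mass_excess_def[abs_def]
  by (rule DERIV_cong[OF DERIV_cdivide[OF DERIV_diff[OF
        has_real_derivative_mass_over_cube[OF \<rho> r] a0_deriv[OF r]]]])
    (use r in \<open>simp add: mem_Icr_pos field_simps\<close>)

context
  fixes \<rho> p :: "real \<Rightarrow> real"
  assumes sol: "TOV_regular R \<rho> p"
    and same_g: "\<And>r. r \<in> Icr R \<Longrightarrow> gfun (mass \<rho>) p r = g0 r"
begin

lemma rho_cont: "continuous_on (Icr R) \<rho>"
  and p_cont: "continuous_on (Icr R) p"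
  using sol by (auto simp: TOV_regular_def)

lemma pressure_eq_mass_excess:
  assumes "r \<in> Icr R"
  shows "p r = p0 r - mass_excess \<rho> r * (1 + 2 * w r)"
proof (rule Icr_eq_if_eq_on_Icr_pos[OF p_cont _ _ assms])
  show "continuous_on (Icr R) (\<lambda>r. p0 r - mass_excess \<rho> r * (1 + 2 * w r))"
    by (intro continuous_intros p0_cont mass_excess_cont rho_cont w_cont)
next
  fix x assume x: "x \<in> Icr_pos R"
  then have "1 - 2 * mass \<rho> x / x \<noteq> 0"
    using sol by (auto simp: TOV_regular_def mem_Icr_pos)
  from gfun_eq_g0_iff[where m = "mass \<rho>" and p = p, OF x mass_eq_mass_excess this] same_g x
  show "p x = p0 x - mass_excess \<rho> x * (1 + 2 * w x)"
    by (simp add: mem_Icr_pos)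
qed

lemma mass_excess_ode:
  assumes r: "r \<in> Icr_pos R"
  shows "(mass_excess \<rho> has_real_derivative kappa r / r * mass_excess \<rho> r) (at r)"
proof -
  let ?u = "mass_excess \<rho>" and ?u' = "(\<rho> r - \<rho>0 r - 3 * mass_excess \<rho> r) / r"
  have rI: "r \<in> Icr R" and r0: "r \<noteq> 0"
    using r Icr_pos_subset_Icr by (auto simp: mem_Icr_pos)
  have "(p has_real_derivative - (\<rho> r + p r) * g0 r) (at r)"
    using sol same_g[OF rI] r by (auto simp: TOV_regular_def mem_Icr_pos)
  moreover have "\<rho> r + p r = (\<rho>0 r + 3 * ?u r + r * ?u') + (p0 r - ?u r * (1 + 2 * w r))"
    using r0 pressure_eq_mass_excess[OF rI] by simp
  ultimately have "(p has_real_derivative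
      - ((\<rho>0 r + 3 * ?u r + r * ?u') + (p0 r - ?u r * (1 + 2 * w r))) * g0 r) (at r)"
    by simp
  then have "((\<lambda>x. p0 x - ?u x * (1 + 2 * w x)) has_real_derivative
      - ((\<rho>0 r + 3 * ?u r + r * ?u') + (p0 r - ?u r * (1 + 2 * w r))) * g0 r) (at r)"
    by (rule has_field_derivative_transform_within_open[OF _ open_Icr_pos r])
      (simp add: pressure_eq_mass_excess Icr_pos_subset_Icr[THEN subsetD])
  then have "r * ?u' = kappa r * ?u r"
    by (rule pressure_deriv_iff[OF r mass_excess_deriv[OF rho_cont r], THEN iffD1])
  with r0 have "?u' = kappa r / r * ?u r"
    by (metis nonzero_mult_div_cancel_left times_divide_eq_left)
  then show ?thesis
    by (rule DERIV_cong[OF mass_excess_deriv[OF rho_cont r]])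
qed

lemma mass_excess_eq_pert_u:
  "r \<in> Icr R \<Longrightarrow> mass_excess \<rho> r = pert_u (\<rho> 0 - \<rho>0 0) r"
  using linear_ode_unique_Icr[OF mass_excess_cont[OF rho_cont] growth_cont _ mass_excess_ode
      growth_deriv] growth_pos
  by (fastforce simp: pert_u_def mass_excess_0)

lemma TOV_solution_eq_pert:
  assumes r: "r \<in> Icr R"
  defines "c \<equiv> \<rho> 0 - \<rho>0 0"
  shows "mass \<rho> r = pert_m \<rho>0 p0 c r \<and> \<rho> r = pert_rho \<rho>0 p0 c r \<and> p r = pert_p \<rho>0 p0 c r"
proof (intro conjI)
  show "mass \<rho> r = pert_m \<rho>0 p0 c r" "p r = pert_p \<rho>0 p0 c r"
    using r by (simp_all add: mass_eq_mass_excess pert_m_eq pressure_eq_mass_excess pert_p_eq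
        mass_excess_eq_pert_u c_def)
  show "\<rho> r = pert_rho \<rho>0 p0 c r"
  proof (cases "r = 0")
    case False
    with r have rP: "r \<in> Icr_pos R" by (auto simp: Icr_pos_def Icr_def)
    from DERIV_unique[OF mass_excess_deriv[OF rho_cont rP] mass_excess_ode[OF rP]] False
    have "\<rho> r = \<rho>0 r + (3 + kappa r) * mass_excess \<rho> r"
      by (simp add: field_simps)
    with r show ?thesis
      by (simp add: pert_rho_eq mass_excess_eq_pert_u c_def)
  qed (simp add: pert_rho_def c_def)
qed

end

end

lemma TOV_background_restrict:
  assumes "TOV_regular R \<rho>0 p0" "\<forall>r\<in>Icr R. 1 + r * gfun (mass \<rho>0) p0 r > 0" "R' \<le> R"
  shows "TOV_background \<rho>0 p0 R'"
  using assms TOV_regular_mono Icr_mono by unfold_locales blast+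

theorem theoremP2:
  fixes \<rho>0 p0 :: "real \<Rightarrow> real" and R :: ereal
  assumes sol0: "TOV_regular R \<rho>0 p0"
    and pos: "\<forall>r\<in>Icr R. 1 + r * gfun (mass \<rho>0) p0 r > 0"
  shows
    "(\<forall>(d\<rho>c::real) (R'::ereal). R' \<le> R \<longrightarrow>
        (\<forall>r\<in>Icr R'. r > 0 \<longrightarrow> 1 - 2 * pert_m \<rho>0 p0 d\<rho>c r / r > 0) \<longrightarrow>
        TOV_regular R' (pert_rho \<rho>0 p0 d\<rho>c) (pert_p \<rho>0 p0 d\<rho>c) \<and>
        (\<forall>r\<in>Icr R'. mass (pert_rho \<rho>0 p0 d\<rho>c) r = pert_m \<rho>0 p0 d\<rho>c r) \<and>
        (\<forall>r\<in>Icr R'. gfun (pert_m \<rho>0 p0 d\<rho>c) (pert_p \<rho>0 p0 d\<rho>c) r = gfun (mass \<rho>0) p0 r) \<and>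
        pert_rho \<rho>0 p0 d\<rho>c 0 = \<rho>0 0 + d\<rho>c \<and>
        pert_p \<rho>0 p0 d\<rho>c 0 = p0 0 + (- d\<rho>c / 3) \<and>
        (\<forall>r\<in>Icr R'. dp \<rho>0 p0 d\<rho>c r =
            (- d\<rho>c / 3) / (1 + r * gfun (mass \<rho>0) p0 r)^2
            * (1 + 8 * pi * p0 r * r^2) / (1 - 2 * mass \<rho>0 r / r) * Phi \<rho>0 p0 r))
     \<and>
     (\<forall>(\<rho>::real \<Rightarrow> real) (p::real \<Rightarrow> real) (R'::ereal). R' \<le> R \<longrightarrow>
        TOV_regular R' \<rho> p \<longrightarrow>
        (\<forall>r\<in>Icr R'. gfun (mass \<rho>) p r = gfun (mass \<rho>0) p0 r) \<longrightarrow>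
        (\<exists>d\<rho>c::real. \<forall>r\<in>Icr R'.
            mass \<rho> r = pert_m \<rho>0 p0 d\<rho>c r \<and>
            \<rho> r = pert_rho \<rho>0 p0 d\<rho>c r \<and>
            p r = pert_p \<rho>0 p0 d\<rho>c r))"
proof ((rule conjI; intro allI impI), goal_cases)
  case (1 d\<rho>c R')
  interpret TOV_background \<rho>0 p0 R'
    by (rule TOV_background_restrict[OF sol0 pos 1(1)])
  show ?case
    using TOV_regular_pert[OF 1(2)] mass_pert_rho gfun_pert 1(2) dp_explicit
    by (simp add: pert_rho_def pert_p_def dp_def)
next
  case (2 \<rho> p R')
  interpret TOV_background \<rho>0 p0 R'
    by (rule TOV_background_restrict[OF sol0 pos 2(1)])
  show ?case
    using TOV_solution_eq_pert[OF 2(2)] 2(3) by blast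
qed

end
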